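(* Let $u$ be a mixed Aleksandrov–viscosity solution of the convexified operator $F_c$ (defined in the context). Then $u$ is convex and is a mixed Aleksandrov–viscosity solution of the operator $F$ (defined in the context).
   Context: Let $K\ge1$, $d_1,\dots,d_K\in\mathbb{R}^2$, $\alpha_1,\dots,\alpha_K>0$ with $\sum_k\alpha_k=\pi=|B(0,1)|$ ($B(0,1)$ the unit ball, $|\cdot|$ Lebesgue measure). Let $X\subset\mathbb{R}^2$ be a bounded open convex set containing all $d_k$. Let $H(p)=\|p\|-1$, $\langle u\rangle=\frac1{|X|}\int_X u$, $\partial u(x)=\{p:u(z)\ge u(x)+p\cdot(z-x)\ \forall z\}$, $M[u](d_k)=|\partial u(d_k)|$, and $a^\pm=\max\{\pm a,0\}$. Operator $F$: $F(x,u,\nabla\varphi(x),D^2\varphi(x))=-\det(D^2\varphi(x))$ for $x\in X\setminus\{d_k\}_k$; $=-M[u](d_k)+\alpha_k$ at $x=d_k$; $=H(\nabla\varphi(x))-\langle u\rangle$ for $x\in\partial X$. Convexified operator $F_c$: the same, except that for $x\in X\setminus\{d_k\}_k$ it equals $-\min_{|\nu|=1,\ \nu\cdot\nu^\perp=0}\{\varphi_{\nu\nu}^+\varphi_{\nu^\perp\nu^\perp}^+-\varphi_{\nu\nu}^--\varphi_{\nu^\perp\nu^\perp}^-\}(x)$ ($\nu^\perp$ a unit vector orthogonal to $\nu$). Extremum convention: at $x_0\in X$ local max/min in the usual sense; at $x_0\in\partial X$, $u-\varphi$ has a local maximum (minimum) at $x_0$ if $u(x_0)-\varphi(x_0)\ge(\le)u(x)-\varphi(x)$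 near $x_0$ and there exist $x_n\notin\partial X$, $\varphi_n\in C^2$ with $(x_n,\varphi_n(x_n),\nabla\varphi_n(x_n),D^2\varphi_n(x_n))\to(x_0,\varphi(x_0),\nabla\varphi(x_0),D^2\varphi(x_0))$ and $u-\varphi_n$ having a local maximum (minimum) at $x_n$. Mixed solution of $F$: a convex $u$ such that (1) for every $x_0\in\bar X\setminus\{d_k\}_k$ and every smooth convex $\varphi$ with $u-\varphi$ having a local maximum (minimum) at $x_0$, $F(x_0,u,\nabla\varphi(x_0),D^2\varphi(x_0))\le0$ ($\ge0$) respectively, and (2) $-M[u](d_k)+\alpha_k=0$ for all $k$. Mixed solution of $F_c$: a Lipschitz continuous $u$ satisfying the same with $F_c$ in place of $F$ and with all smooth (not necessarily convex) test functions $\varphi$. *)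

theory Defs
  imports "HOL-Analysis.Analysis"
begin

type_synonym pt = "real ^ 2"

definition C2_with :: "(pt \<Rightarrow> real) \<Rightarrow> (pt \<Rightarrow> pt) \<Rightarrow> (pt \<Rightarrow> real ^ 2 ^ 2) \<Rightarrow> bool" where
  "C2_with \<phi> g Hs \<longleftrightarrow>
     (\<forall>x. (\<phi> has_derivative (\<lambda>h. g x \<bullet> h)) (at x)) \<and>
     (\<forall>x. (g has_derivative (\<lambda>h. Hs x *v h)) (at x)) \<and>
     continuous_on UNIV Hs"

definition loc_max_in :: "pt set \<Rightarrow> (pt \<Rightarrow> real) \<Rightarrow> pt \<Rightarrow> bool" where
  "loc_max_in S f x0 \<longleftrightarrow> (\<exists>e>0. \<forall>x\<in>S \<inter> ball x0 e. f x \<le> f x0)"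

definition loc_min_in :: "pt set \<Rightarrow> (pt \<Rightarrow> real) \<Rightarrow> pt \<Rightarrow> bool" where
  "loc_min_in S f x0 \<longleftrightarrow> (\<exists>e>0. \<forall>x\<in>S \<inter> ball x0 e. f x \<ge> f x0)"

definition gen_max :: "pt set \<Rightarrow> (pt \<Rightarrow> real) \<Rightarrow> (pt \<Rightarrow> real) \<Rightarrow> (pt \<Rightarrow> pt)
    \<Rightarrow> (pt \<Rightarrow> real^2^2) \<Rightarrow> pt \<Rightarrow> bool" where
  "gen_max X u \<phi> g Hs x0 \<longleftrightarrow>
     loc_max_in (closure X) (\<lambda>x. u x - \<phi> x) x0 \<and>
     (x0 \<in> frontier X \<longrightarrow>
       (\<exists>xs \<phi>s gs Hss.
          (\<forall>n. xs n \<in> X \<and> C2_with (\<phi>s n) (gs n) (Hss n) \<and>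
               loc_max_in (closure X) (\<lambda>x. u x - \<phi>s n x) (xs n)) \<and>
          xs \<longlonglongrightarrow> x0 \<and>
          (\<lambda>n. \<phi>s n (xs n)) \<longlonglongrightarrow> \<phi> x0 \<and>
          (\<lambda>n. gs n (xs n)) \<longlonglongrightarrow> g x0 \<and>
          (\<lambda>n. Hss n (xs n)) \<longlonglongrightarrow> Hs x0))"

definition gen_min :: "pt set \<Rightarrow> (pt \<Rightarrow> real) \<Rightarrow> (pt \<Rightarrow> real) \<Rightarrow> (pt \<Rightarrow> pt)
    \<Rightarrow> (pt \<Rightarrow> real^2^2) \<Rightarrow> pt \<Rightarrow> bool" where
  "gen_min X u \<phi> g Hs x0 \<longleftrightarrow>
     loc_min_in (closure X) (\<lambda>x. u x - \<phi> x) x0 \<and>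
     (x0 \<in> frontier X \<longrightarrow>
       (\<exists>xs \<phi>s gs Hss.
          (\<forall>n. xs n \<in> X \<and> C2_with (\<phi>s n) (gs n) (Hss n) \<and>
               loc_min_in (closure X) (\<lambda>x. u x - \<phi>s n x) (xs n)) \<and>
          xs \<longlonglongrightarrow> x0 \<and>
          (\<lambda>n. \<phi>s n (xs n)) \<longlonglongrightarrow> \<phi> x0 \<and>
          (\<lambda>n. gs n (xs n)) \<longlonglongrightarrow> g x0 \<and>
          (\<lambda>n. Hss n (xs n)) \<longlonglongrightarrow> Hs x0))"

definition subdiff :: "pt set \<Rightarrow> (pt \<Rightarrow> real) \<Rightarrow> pt \<Rightarrow> pt set" where
  "subdiff X u x = {p. \<forall>z\<in>closure X. u z \<ge> u x + p \<bullet> (z - x)}"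

definition MA :: "pt set \<Rightarrow> (pt \<Rightarrow> real) \<Rightarrow> pt \<Rightarrow> real" where
  "MA X u x = measure lebesgue (subdiff X u x)"

definition avg :: "pt set \<Rightarrow> (pt \<Rightarrow> real) \<Rightarrow> real" where
  "avg X u = integral X u / measure lebesgue X"

definition Hm :: "pt \<Rightarrow> real" where
  "Hm p = norm p - 1"

text \<open>F and F_c away from the points d_k (the value at d_k enters only through
  condition (2) of the solution notion).\<close>
definition Fop :: "pt set \<Rightarrow> (pt \<Rightarrow> real) \<Rightarrow> pt \<Rightarrow> pt \<Rightarrow> real^2^2 \<Rightarrow> real" where
  "Fop X u x p M = (if x \<in> frontier X then Hm p - avg X u else - det M)"

definition convexified_det :: "real^2^2 \<Rightarrow> real" where
  "convexified_det M = Inf {max (\<nu> \<bullet> (M *v \<nu>)) 0 * max (\<mu> \<bullet> (M *v \<mu>)) 0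
        - max (- (\<nu> \<bullet> (M *v \<nu>))) 0 - max (- (\<mu> \<bullet> (M *v \<mu>))) 0
     | \<nu> \<mu>. norm \<nu> = 1 \<and> norm \<mu> = 1 \<and> \<nu> \<bullet> \<mu> = 0}"

definition Fcop :: "pt set \<Rightarrow> (pt \<Rightarrow> real) \<Rightarrow> pt \<Rightarrow> pt \<Rightarrow> real^2^2 \<Rightarrow> real" where
  "Fcop X u x p M = (if x \<in> frontier X then Hm p - avg X u else - convexified_det M)"

definition mixed_sol_F :: "pt set \<Rightarrow> nat \<Rightarrow> (nat \<Rightarrow> pt) \<Rightarrow> (nat \<Rightarrow> real) \<Rightarrow> (pt \<Rightarrow> real) \<Rightarrow> bool" where
  "mixed_sol_F X K d \<alpha> u \<longleftrightarrow>
     convex_on (closure X) u \<and>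
     (\<forall>x0 \<in> closure X - d ` {..<K}. \<forall>\<phi> g Hs. C2_with \<phi> g Hs \<and> convex_on UNIV \<phi> \<longrightarrow>
        (gen_max X u \<phi> g Hs x0 \<longrightarrow> Fop X u x0 (g x0) (Hs x0) \<le> 0) \<and>
        (gen_min X u \<phi> g Hs x0 \<longrightarrow> Fop X u x0 (g x0) (Hs x0) \<ge> 0)) \<and>
     (\<forall>k<K. - MA X u (d k) + \<alpha> k = 0)"

definition mixed_sol_Fc :: "pt set \<Rightarrow> nat \<Rightarrow> (nat \<Rightarrow> pt) \<Rightarrow> (nat \<Rightarrow> real) \<Rightarrow> (pt \<Rightarrow> real) \<Rightarrow> bool" where
  "mixed_sol_Fc X K d \<alpha> u \<longleftrightarrow>
     (\<exists>L. L-lipschitz_on (closure X) u) \<and>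
     (\<forall>x0 \<in> closure X - d ` {..<K}. \<forall>\<phi> g Hs. C2_with \<phi> g Hs \<longrightarrow>
        (gen_max X u \<phi> g Hs x0 \<longrightarrow> Fcop X u x0 (g x0) (Hs x0) \<le> 0) \<and>
        (gen_min X u \<phi> g Hs x0 \<longrightarrow> Fcop X u x0 (g x0) (Hs x0) \<ge> 0)) \<and>
     (\<forall>k<K. - MA X u (d k) + \<alpha> k = 0)"

end

theory Submission
  imports Defs
begin

text \<open>If \<open>u\<close> failed to be convex along a segment \<open>[a, a + e]\<close> avoiding the points \<open>d\<^sub>k\<close>, the excess
  \<open>f s = u (a + s e) - \<ell> s\<close> of \<open>u\<close> over its chord \<open>\<ell>\<close> would attain a positive maximum \<open>\<theta>\<close> at some \<open>\<tau>\<close>.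
  In coordinates \<open>(s, r)\<close> along and across the segment, the quadratic
  \<open>\<phi> = \<ell> - \<delta> (s - \<tau>)\<^sup>2 + M r\<^sup>2\<close>, with \<open>M\<close> large enough to beat the Lipschitz growth of \<open>u\<close>
  across the segment, makes \<open>u - \<phi>\<close> attain a local maximum inside a thin box around the segment.
  The constant Hessian of \<open>\<phi>\<close> is concave along and convex across the segment, so its convexified
  determinant is negative, contradicting the subsolution property for \<open>F\<^sub>c\<close>. Segments through the
  finitely many \<open>d\<^sub>k\<close> are handled by translating them transversally, and convexity passes to the
  closure by continuity. Finally, the Hessian of a convex test function is symmetric positive
  semidefinite, so \<open>0 \<le> det D\<^sup>2\<phi> \<le> convexified_det D\<^sup>2\<phi>\<close>, which turns the inequalities for
  \<open>F\<^sub>c\<close> into those for \<open>F\<close>.\<close>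

lemma inner_vec2: "(x::real^2) \<bullet> y = x$1 * y$1 + x$2 * y$2"
  by (simp add: inner_vec_def sum_2)

lemma matrix_vector_mult_vec2:
  "((M::real^2^2) *v v)$1 = M$1$1 * v$1 + M$1$2 * v$2"
  "(M *v v)$2 = M$2$1 * v$1 + M$2$2 * v$2"
  by (simp_all add: matrix_vector_mult_def sum_2)

lemma norm_vec2_squared: "(norm (x::real^2))^2 = x$1^2 + x$2^2"
  by (simp only: power2_norm_eq_inner inner_vec2) (simp add: power2_eq_square)

definition rot90 :: "real^2 \<Rightarrow> real^2" where
  "rot90 e = (\<chi> i. if i = 1 then - e$2 else e$1)"

lemma rot90_nth [simp]: "rot90 e $ 1 = - e$2" "rot90 e $ 2 = e$1"
  by (simp_all add: rot90_def)

lemma inner_rot90_right [simp]: "e \<bullet> rot90 e = 0"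
  and inner_rot90_left [simp]: "rot90 e \<bullet> e = 0"
  and inner_rot90_rot90 [simp]: "rot90 e \<bullet> rot90 e = e \<bullet> e"
  by (simp_all add: inner_vec2)

lemma norm_rot90 [simp]: "norm (rot90 e) = norm e"
  by (simp add: norm_eq_sqrt_inner)

lemma scaleR_inner_self_eq_rot90_decomposition:
  "(e \<bullet> e) *\<^sub>R y = (y \<bullet> e) *\<^sub>R e + (y \<bullet> rot90 e) *\<^sub>R rot90 e"
  by (simp add: vec_eq_iff forall_2 inner_vec2 algebra_simps)

lemma quadratic_form_vec2:
  "v \<bullet> ((M::real^2^2) *v v) = M$1$1 * v$1^2 + (M$1$2 + M$2$1) * v$1 * v$2 + M$2$2 * v$2^2"
  by (simp add: inner_vec2 matrix_vector_mult_vec2 power2_eq_square algebra_simps)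

lemma quadratic_form_orthonormal_product:
  fixes \<nu> \<mu> :: "real^2" and M :: "real^2^2"
  assumes "norm \<nu> = 1" "norm \<mu> = 1" "\<nu> \<bullet> \<mu> = 0" "M$1$2 = M$2$1"
  shows "(\<nu> \<bullet> (M *v \<nu>)) * (\<mu> \<bullet> (M *v \<mu>)) = det M + (\<nu> \<bullet> (M *v \<mu>))^2"
proof -
  have n: "\<nu>$1^2 + \<nu>$2^2 = 1" "\<mu>$1^2 + \<mu>$2^2 = 1"
    using assms(1,2) norm_vec2_squared by (metis power_one)+
  have o: "\<nu>$1 * \<mu>$1 + \<nu>$2 * \<mu>$2 = 0"
    using assms(3) by (simp add: inner_vec2)
  have "(\<nu>$1 * \<mu>$2 - \<nu>$2 * \<mu>$1)^2
      = (\<nu>$1^2 + \<nu>$2^2) * (\<mu>$1^2 + \<mu>$2^2) - (\<nu>$1 * \<mu>$1 + \<nu>$2 * \<mu>$2)^2"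
    by algebra
  then have unit_area: "(\<nu>$1 * \<mu>$2 - \<nu>$2 * \<mu>$1)^2 = 1"
    using n o by simp
  have "(\<nu> \<bullet> (M *v \<nu>)) * (\<mu> \<bullet> (M *v \<mu>)) - (\<nu> \<bullet> (M *v \<mu>))^2
      = det M * (\<nu>$1 * \<mu>$2 - \<nu>$2 * \<mu>$1)^2"
    unfolding inner_vec2 matrix_vector_mult_vec2 det_2
    using assms(4) by (simp add: power2_eq_square algebra_simps)
  then show ?thesis
    using unit_area by simp
qed

lemma abs_quadratic_form_le:
  assumes "norm (v::real^2) = 1"
  shows "\<bar>v \<bullet> (M *v v)\<bar> \<le> \<bar>M$1$1\<bar> + \<bar>M$1$2\<bar> + \<bar>M$2$1\<bar> + \<bar>M$2$2\<bar>"
proof -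
  have "v$1^2 + v$2^2 = 1"
    using assms norm_vec2_squared by (metis power_one)
  then have "v$1^2 \<le> 1" "v$2^2 \<le> 1"
    using zero_le_power2[of "v$1"] zero_le_power2[of "v$2"] by linarith+
  then have "\<bar>v$1\<bar> \<le> 1" "\<bar>v$2\<bar> \<le> 1"
    by (simp_all add: abs_square_le_1)
  then have coeff: "\<bar>v$i * v$j\<bar> \<le> 1" for i j
    by (metis (full_types) abs_mult exhaust_2 mult_le_one abs_ge_zero)
  have abs_sum4: "\<bar>p + q + r + s\<bar> \<le> \<bar>p\<bar> + \<bar>q\<bar> + \<bar>r\<bar> + \<bar>s\<bar>" for p q r s :: real
    by (simp add: abs_if)
  have "\<bar>v \<bullet> (M *v v)\<bar>
      = \<bar>M$1$1 * (v$1 * v$1) + M$1$2 * (v$1 * v$2) + M$2$1 * (v$2 * v$1) + M$2$2 * (v$2 * v$2)\<bar>"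
    unfolding inner_vec2 matrix_vector_mult_vec2 by (simp add: algebra_simps)
  also have "\<dots> \<le> \<bar>M$1$1\<bar> * \<bar>v$1 * v$1\<bar> + \<bar>M$1$2\<bar> * \<bar>v$1 * v$2\<bar>
                 + \<bar>M$2$1\<bar> * \<bar>v$2 * v$1\<bar> + \<bar>M$2$2\<bar> * \<bar>v$2 * v$2\<bar>"
    unfolding abs_mult[symmetric] by (rule abs_sum4)
  also have "\<dots> \<le> \<bar>M$1$1\<bar> + \<bar>M$1$2\<bar> + \<bar>M$2$1\<bar> + \<bar>M$2$2\<bar>"
    by (intro add_mono mult_right_le_one_le abs_ge_zero coeff)
  finally show ?thesis .
qed

lemma bdd_below_convexified_det_set:
  fixes M :: "real^2^2"
  shows "bdd_below {max (\<nu> \<bullet> (M *v \<nu>)) 0 * max (\<mu> \<bullet> (M *v \<mu>)) 0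
        - max (- (\<nu> \<bullet> (M *v \<nu>))) 0 - max (- (\<mu> \<bullet> (M *v \<mu>))) 0
     | \<nu> \<mu>. norm \<nu> = 1 \<and> norm \<mu> = 1 \<and> \<nu> \<bullet> \<mu> = (0::real)}"
proof -
  let ?B = "\<bar>M$1$1\<bar> + \<bar>M$1$2\<bar> + \<bar>M$2$1\<bar> + \<bar>M$2$2\<bar>"
  have "-2 * ?B \<le> max (\<nu> \<bullet> (M *v \<nu>)) 0 * max (\<mu> \<bullet> (M *v \<mu>)) 0
        - max (- (\<nu> \<bullet> (M *v \<nu>))) 0 - max (- (\<mu> \<bullet> (M *v \<mu>))) 0"
    if "norm \<nu> = 1" "norm \<mu> = 1" for \<nu> \<mu> :: "real^2"
  proof -
    have "\<bar>\<nu> \<bullet> (M *v \<nu>)\<bar> \<le> ?B" "\<bar>\<mu> \<bullet> (M *v \<mu>)\<bar> \<le> ?B"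
      using that by (simp_all add: abs_quadratic_form_le)
    moreover have "max (\<nu> \<bullet> (M *v \<nu>)) 0 * max (\<mu> \<bullet> (M *v \<mu>)) 0 \<ge> 0"
      by simp
    moreover have "max (- p) 0 \<le> \<bar>p\<bar>" for p :: real
      by simp
    ultimately show ?thesis
      by (smt (verit))
  qed
  then show ?thesis
    unfolding bdd_below_def by blast
qed

lemma convexified_det_le:
  assumes "norm \<nu> = 1" "norm \<mu> = 1" "\<nu> \<bullet> \<mu> = 0"
  shows "convexified_det M \<le> max (\<nu> \<bullet> (M *v \<nu>)) 0 * max (\<mu> \<bullet> (M *v \<mu>)) 0
        - max (- (\<nu> \<bullet> (M *v \<nu>))) 0 - max (- (\<mu> \<bullet> (M *v \<mu>))) 0"
  unfolding convexified_det_def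
  by (rule cInf_lower[OF _ bdd_below_convexified_det_set]) (use assms in blast)

lemma det_le_convexified_det:
  assumes psd: "\<And>v. v \<bullet> (M *v v) \<ge> 0" and sym: "M$1$2 = M$2$1"
  shows "det M \<le> convexified_det M"
  unfolding convexified_det_def
proof (rule cInf_greatest)
  have "norm (axis 1 1 :: real^2) = 1 \<and> norm (axis 2 1 :: real^2) = 1 \<and> axis 1 1 \<bullet> (axis 2 1 :: real^2) = 0"
    by (simp add: inner_vec2 axis_def norm_eq_sqrt_inner)
  then show "{max (\<nu> \<bullet> (M *v \<nu>)) 0 * max (\<mu> \<bullet> (M *v \<mu>)) 0
        - max (- (\<nu> \<bullet> (M *v \<nu>))) 0 - max (- (\<mu> \<bullet> (M *v \<mu>))) 0
     | \<nu> \<mu>. norm \<nu> = 1 \<and> norm \<mu> = 1 \<and> \<nu> \<bullet> \<mu> = 0} \<noteq> {}"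
    by blast
next
  fix z assume "z \<in> {max (\<nu> \<bullet> (M *v \<nu>)) 0 * max (\<mu> \<bullet> (M *v \<mu>)) 0
        - max (- (\<nu> \<bullet> (M *v \<nu>))) 0 - max (- (\<mu> \<bullet> (M *v \<mu>))) 0
     | \<nu> \<mu>. norm \<nu> = 1 \<and> norm \<mu> = 1 \<and> \<nu> \<bullet> \<mu> = 0}"
  then obtain \<nu> \<mu> :: "real^2" where frame: "norm \<nu> = 1" "norm \<mu> = 1" "\<nu> \<bullet> \<mu> = 0"
    and "z = max (\<nu> \<bullet> (M *v \<nu>)) 0 * max (\<mu> \<bullet> (M *v \<mu>)) 0
        - max (- (\<nu> \<bullet> (M *v \<nu>))) 0 - max (- (\<mu> \<bullet> (M *v \<mu>))) 0"
    by blast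
  then have "z = (\<nu> \<bullet> (M *v \<nu>)) * (\<mu> \<bullet> (M *v \<mu>))"
    using psd[of \<nu>] psd[of \<mu>] by simp
  also have "\<dots> = det M + (\<nu> \<bullet> (M *v \<mu>))^2"
    by (rule quadratic_form_orthonormal_product[OF frame sym])
  finally show "det M \<le> z"
    by simp
qed

lemma det_nonneg_if_psd:
  fixes M :: "real^2^2"
  assumes psd: "\<And>v. v \<bullet> (M *v v) \<ge> 0" and sym: "M$1$2 = M$2$1"
  shows "det M \<ge> 0"
proof -
  have q: "M$1$1 * x^2 + 2 * M$1$2 * x * y + M$2$2 * y^2 \<ge> 0" for x y
    using psd[of "vector [x, y]"] sym unfolding quadratic_form_vec2 by (simp add: algebra_simps)
  show ?thesis
  proof (cases "M$1$1 = 0")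
    case True
    have "M$1$2 = 0"
    proof (rule ccontr)
      assume "M$1$2 \<noteq> 0"
      then have "M$1$1 * (-(M$2$2 + 1) / (2 * M$1$2))^2 + 2 * M$1$2 * (-(M$2$2 + 1) / (2 * M$1$2)) * 1
          + M$2$2 * 1^2 = -1"
        using True by (simp add: field_simps)
      with q[of "-(M$2$2 + 1) / (2 * M$1$2)" 1] show False
        by linarith
    qed
    then show ?thesis
      by (simp add: det_2 True)
  next
    case False
    with q[of 1 0] have pos: "M$1$1 > 0"
      by simp
    have "M$1$1 * (M$1$1 * M$2$2 - M$1$2^2)
        = M$1$1 * (M$1$2)^2 + 2 * M$1$2 * M$1$2 * (- M$1$1) + M$2$2 * (- M$1$1)^2"
      by (simp add: power2_eq_square algebra_simps)
    with q[of "M$1$2" "- M$1$1"] have "M$1$1 * (M$1$1 * M$2$2 - M$1$2^2) \<ge> 0"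
      by linarith
    with pos have "M$1$1 * M$2$2 - M$1$2^2 \<ge> 0"
      by (simp add: zero_le_mult_iff)
    then show ?thesis
      by (simp add: det_2 sym power2_eq_square)
  qed
qed

definition frame_hessian :: "real \<Rightarrow> real^2 \<Rightarrow> real \<Rightarrow> real^2 \<Rightarrow> real^2^2" where
  "frame_hessian \<alpha> e \<gamma> w = (\<chi> i j. 2 * \<alpha> * e$i * e$j + 2 * \<gamma> * w$i * w$j)"

lemma frame_hessian_mult:
  "frame_hessian \<alpha> e \<gamma> w *v h = (2 * \<alpha> * (h \<bullet> e)) *\<^sub>R e + (2 * \<gamma> * (h \<bullet> w)) *\<^sub>R w"
  by (simp add: frame_hessian_def vec_eq_iff forall_2 matrix_vector_mult_vec2 inner_vec2 algebra_simps)

lemma C2_frame_quadratic: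
  "C2_with (\<lambda>x. c0 + c1 * ((x - a) \<bullet> e) + \<alpha> * ((x - a) \<bullet> e - \<beta>)^2 + \<gamma> * ((x - a) \<bullet> w)^2)
           (\<lambda>x. (c1 + 2 * \<alpha> * ((x - a) \<bullet> e - \<beta>)) *\<^sub>R e + (2 * \<gamma> * ((x - a) \<bullet> w)) *\<^sub>R w)
           (\<lambda>x. frame_hessian \<alpha> e \<gamma> w)"
  unfolding C2_with_def
proof (intro conjI allI)
  fix x :: "real^2"
  show "((\<lambda>x. c0 + c1 * ((x - a) \<bullet> e) + \<alpha> * ((x - a) \<bullet> e - \<beta>)^2 + \<gamma> * ((x - a) \<bullet> w)^2)
      has_derivative (\<lambda>h. ((c1 + 2 * \<alpha> * ((x - a) \<bullet> e - \<beta>)) *\<^sub>R e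
                           + (2 * \<gamma> * ((x - a) \<bullet> w)) *\<^sub>R w) \<bullet> h)) (at x)"
    by (rule derivative_eq_intros refl | simp)+
       (simp add: inner_add_left inner_commute algebra_simps)
  show "((\<lambda>x. (c1 + 2 * \<alpha> * ((x - a) \<bullet> e - \<beta>)) *\<^sub>R e + (2 * \<gamma> * ((x - a) \<bullet> w)) *\<^sub>R w)
      has_derivative (\<lambda>h. frame_hessian \<alpha> e \<gamma> w *v h)) (at x)"
    unfolding frame_hessian_mult by (rule derivative_eq_intros refl | simp)+
qed simp

lemma convexified_det_frame_hessian_neg:
  assumes "e \<noteq> 0" "\<alpha> < 0" "\<gamma> > 0"
  shows "convexified_det (frame_hessian \<alpha> e \<gamma> (rot90 e)) < 0"
proof -
  define \<nu> where "\<nu> = (1 / norm e) *\<^sub>R e"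
  define \<mu> where "\<mu> = (1 / norm e) *\<^sub>R rot90 e"
  have frame: "norm \<nu> = 1" "norm \<mu> = 1" "\<nu> \<bullet> \<mu> = 0"
    using assms(1) by (simp_all add: \<nu>_def \<mu>_def)
  have ee: "e \<bullet> e = (norm e)^2"
    by (simp add: power2_norm_eq_inner)
  have "\<nu> \<bullet> (frame_hessian \<alpha> e \<gamma> (rot90 e) *v \<nu>) = 2 * \<alpha> * (e \<bullet> e)"
    "\<mu> \<bullet> (frame_hessian \<alpha> e \<gamma> (rot90 e) *v \<mu>) = 2 * \<gamma> * (e \<bullet> e)"
    unfolding frame_hessian_mult \<nu>_def \<mu>_def using assms(1) ee
    by (simp_all add: inner_add_right inner_commute power2_eq_square field_simps)
  moreover have "2 * \<alpha> * (e \<bullet> e) < 0" "2 * \<gamma> * (e \<bullet> e) > 0"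
    using assms by (simp_all add: mult_neg_pos)
  ultimately show ?thesis
    using convexified_det_le[OF frame, of "frame_hessian \<alpha> e \<gamma> (rot90 e)"] by simp
qed

lemma C2_has_real_derivative_along_line:
  assumes "C2_with \<phi> g Hs"
  shows "((\<lambda>\<sigma>. \<phi> (p + \<sigma> *\<^sub>R v)) has_real_derivative (g (p + \<sigma> *\<^sub>R v) \<bullet> v)) (at \<sigma>)"
proof -
  have "(\<phi> has_derivative (\<lambda>h. g (p + \<sigma> *\<^sub>R v) \<bullet> h)) (at (p + \<sigma> *\<^sub>R v))"
    using assms unfolding C2_with_def by blast
  moreover have "((\<lambda>\<sigma>. p + \<sigma> *\<^sub>R v) has_derivative (\<lambda>h. h *\<^sub>R v)) (at \<sigma>)"
    by (rule derivative_eq_intros refl | simp)+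
  ultimately have "((\<lambda>\<sigma>. \<phi> (p + \<sigma> *\<^sub>R v)) has_derivative (\<lambda>h. g (p + \<sigma> *\<^sub>R v) \<bullet> (h *\<^sub>R v))) (at \<sigma>)"
    using has_derivative_compose by blast
  then show ?thesis
    unfolding has_field_derivative_def by (rule has_derivative_eq_rhs) (auto simp: fun_eq_iff)
qed

lemma C2_gradient_has_real_derivative_along_line:
  assumes "C2_with \<phi> g Hs"
  shows "((\<lambda>\<tau>. g (p + \<tau> *\<^sub>R w) \<bullet> v) has_real_derivative ((Hs (p + \<tau> *\<^sub>R w) *v w) \<bullet> v)) (at \<tau>)"
proof -
  have "(g has_derivative (\<lambda>h. Hs (p + \<tau> *\<^sub>R w) *v h)) (at (p + \<tau> *\<^sub>R w))"
    using assms unfolding C2_with_def by blast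
  moreover have "((\<lambda>\<tau>. p + \<tau> *\<^sub>R w) has_derivative (\<lambda>h. h *\<^sub>R w)) (at \<tau>)"
    by (rule derivative_eq_intros refl | simp)+
  ultimately have "((\<lambda>\<tau>. g (p + \<tau> *\<^sub>R w)) has_derivative (\<lambda>h. Hs (p + \<tau> *\<^sub>R w) *v (h *\<^sub>R w))) (at \<tau>)"
    using has_derivative_compose by blast
  from has_derivative_inner_left[OF this, of v]
  have "((\<lambda>\<tau>. g (p + \<tau> *\<^sub>R w) \<bullet> v) has_derivative (\<lambda>h. h * ((Hs (p + \<tau> *\<^sub>R w) *v w) \<bullet> v))) (at \<tau>)"
    by (simp add: matrix_vector_mult_scaleR inner_scaleR_left)
  then show ?thesis
    unfolding has_field_derivative_def by (rule has_derivative_eq_rhs) (auto simp: fun_eq_iff)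
qed

lemma C2_second_difference_mean_value:
  assumes C: "C2_with \<phi> g Hs" and "s > 0" "t > 0"
  obtains \<xi> where "norm (\<xi> - x) \<le> s * norm v + t * norm w"
    "\<phi> (x + s *\<^sub>R v + t *\<^sub>R w) - \<phi> (x + s *\<^sub>R v) - \<phi> (x + t *\<^sub>R w) + \<phi> x = s * t * ((Hs \<xi> *v w) \<bullet> v)"
proof -
  define G where "G \<sigma> = \<phi> ((x + t *\<^sub>R w) + \<sigma> *\<^sub>R v) - \<phi> (x + \<sigma> *\<^sub>R v)" for \<sigma>
  have "DERIV G \<sigma> :> g ((x + t *\<^sub>R w) + \<sigma> *\<^sub>R v) \<bullet> v - g (x + \<sigma> *\<^sub>R v) \<bullet> v" for \<sigma>
    unfolding G_def by (intro derivative_intros C2_has_real_derivative_along_line[OF C])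
  from MVT2[OF \<open>s > 0\<close> this] obtain \<sigma> where \<sigma>: "0 < \<sigma>" "\<sigma> < s"
    "G s - G 0 = s * (g ((x + \<sigma> *\<^sub>R v) + t *\<^sub>R w) \<bullet> v - g ((x + \<sigma> *\<^sub>R v) + 0 *\<^sub>R w) \<bullet> v)"
    by (auto simp: algebra_simps)
  from MVT2[OF \<open>t > 0\<close> C2_gradient_has_real_derivative_along_line[OF C, where p="x + \<sigma> *\<^sub>R v" and w=w and v=v]]
  obtain \<tau> where \<tau>: "0 < \<tau>" "\<tau> < t"
    "g ((x + \<sigma> *\<^sub>R v) + t *\<^sub>R w) \<bullet> v - g ((x + \<sigma> *\<^sub>R v) + 0 *\<^sub>R w) \<bullet> v
       = t * ((Hs ((x + \<sigma> *\<^sub>R v) + \<tau> *\<^sub>R w) *v w) \<bullet> v)"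
    by auto
  show ?thesis
  proof
    have "norm (\<sigma> *\<^sub>R v + \<tau> *\<^sub>R w) \<le> norm (\<sigma> *\<^sub>R v) + norm (\<tau> *\<^sub>R w)"
      by (rule norm_triangle_ineq)
    also have "\<dots> \<le> s * norm v + t * norm w"
      using \<sigma> \<tau> by (intro add_mono) (auto intro: mult_right_mono)
    finally have "norm (\<sigma> *\<^sub>R v + \<tau> *\<^sub>R w) \<le> s * norm v + t * norm w" .
    then show "norm ((x + \<sigma> *\<^sub>R v + \<tau> *\<^sub>R w) - x) \<le> s * norm v + t * norm w"
      by (simp add: algebra_simps)
    have "\<phi> (x + s *\<^sub>R v + t *\<^sub>R w) - \<phi> (x + s *\<^sub>R v) - \<phi> (x + t *\<^sub>R w) + \<phi> x = G s - G 0"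
      by (simp add: G_def algebra_simps)
    then show "\<phi> (x + s *\<^sub>R v + t *\<^sub>R w) - \<phi> (x + s *\<^sub>R v) - \<phi> (x + t *\<^sub>R w) + \<phi> x
        = s * t * ((Hs (x + \<sigma> *\<^sub>R v + \<tau> *\<^sub>R w) *v w) \<bullet> v)"
      using \<sigma>(3) \<tau>(3) by simp
  qed
qed

lemma C2_hessian_symmetric:
  assumes C: "C2_with \<phi> g Hs"
  shows "Hs x $ 1 $ 2 = Hs x $ 2 $ 1"
proof (rule ccontr)
  let ?v = "axis 1 1 :: real^2" and ?w = "axis 2 1 :: real^2"
  have entries: "(Hs y *v ?w) \<bullet> ?v = Hs y $ 1 $ 2" "(Hs y *v ?v) \<bullet> ?w = Hs y $ 2 $ 1" for y
    by (simp_all add: inner_vec2 matrix_vector_mult_vec2 axis_def)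
  have norms: "norm ?v = 1" "norm ?w = 1"
    by simp_all
  assume "Hs x $ 1 $ 2 \<noteq> Hs x $ 2 $ 1"
  then have \<epsilon>: "\<bar>Hs x $ 1 $ 2 - Hs x $ 2 $ 1\<bar> / 2 > 0"
    by simp
  have "isCont Hs x"
    using C unfolding C2_with_def by (simp add: continuous_on_eq_continuous_at)
  then have "isCont (\<lambda>y. Hs y $ i $ j) x" for i j
    by simp
  then obtain r1 r2 where r: "r1 > 0" "r2 > 0"
    "\<And>y. dist y x < r1 \<Longrightarrow> \<bar>Hs y $ 1 $ 2 - Hs x $ 1 $ 2\<bar> < \<bar>Hs x $ 1 $ 2 - Hs x $ 2 $ 1\<bar> / 2"
    "\<And>y. dist y x < r2 \<Longrightarrow> \<bar>Hs y $ 2 $ 1 - Hs x $ 2 $ 1\<bar> < \<bar>Hs x $ 1 $ 2 - Hs x $ 2 $ 1\<bar> / 2"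
    using \<epsilon> unfolding continuous_at_eps_delta dist_real_def by metis
  define s where "s = min r1 r2 / 4"
  have s: "s > 0" "2 * s < r1" "2 * s < r2"
    using r(1,2) by (simp_all add: s_def)
  text \<open>Both mixed second differences of \<open>\<phi>\<close> over the square with side \<open>s\<close> are the same number.\<close>
  obtain \<xi> where \<xi>: "norm (\<xi> - x) \<le> s * norm ?v + s * norm ?w"
    "\<phi> (x + s *\<^sub>R ?v + s *\<^sub>R ?w) - \<phi> (x + s *\<^sub>R ?v) - \<phi> (x + s *\<^sub>R ?w) + \<phi> x = s * s * Hs \<xi> $ 1 $ 2"
    using C2_second_difference_mean_value[OF C s(1) s(1), of x ?v ?w] entries by metis
  obtain \<xi>' where \<xi>': "norm (\<xi>' - x) \<le> s * norm ?w + s * norm ?v"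
    "\<phi> (x + s *\<^sub>R ?w + s *\<^sub>R ?v) - \<phi> (x + s *\<^sub>R ?w) - \<phi> (x + s *\<^sub>R ?v) + \<phi> x = s * s * Hs \<xi>' $ 2 $ 1"
    using C2_second_difference_mean_value[OF C s(1) s(1), of x ?w ?v] entries by metis
  have "Hs \<xi> $ 1 $ 2 = Hs \<xi>' $ 2 $ 1"
    using \<xi>(2) \<xi>'(2) s(1) by (simp add: algebra_simps)
  moreover have "dist \<xi> x < r1" "dist \<xi>' x < r2"
    using \<xi>(1) \<xi>'(1) norms s by (simp_all add: dist_norm)
  ultimately show False
    using r(3)[of \<xi>] r(4)[of \<xi>'] by (simp add: abs_if split: if_splits)
qed

lemma convex_on_line_restriction:
  fixes \<phi> :: "'a::real_vector \<Rightarrow> real"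
  assumes "convex_on UNIV \<phi>"
  shows "convex_on UNIV (\<lambda>t. \<phi> (x + t *\<^sub>R h))"
proof (rule convex_onI)
  fix l a b :: real assume "l > 0" "l < 1"
  have "x + ((1 - l) *\<^sub>R a + l *\<^sub>R b) *\<^sub>R h = (1 - l) *\<^sub>R (x + a *\<^sub>R h) + l *\<^sub>R (x + b *\<^sub>R h)"
    by (simp add: algebra_simps)
  then show "\<phi> (x + ((1 - l) *\<^sub>R a + l *\<^sub>R b) *\<^sub>R h) \<le> (1 - l) * \<phi> (x + a *\<^sub>R h) + l * \<phi> (x + b *\<^sub>R h)"
    using convex_onD[OF assms, of l] \<open>l > 0\<close> \<open>l < 1\<close> by simp
qed simp

lemma C2_convex_hessian_psd:
  assumes C: "C2_with \<phi> g Hs" and cv: "convex_on UNIV \<phi>"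
  shows "h \<bullet> (Hs x *v h) \<ge> 0"
proof -
  define \<psi> where "\<psi> t = \<phi> (x + t *\<^sub>R h)" for t
  define K where "K t = g (x + t *\<^sub>R h) \<bullet> h" for t
  have "convex_on UNIV \<psi>"
    unfolding \<psi>_def by (rule convex_on_line_restriction[OF cv])
  moreover have D: "DERIV \<psi> t :> K t" for t
    unfolding \<psi>_def K_def by (rule C2_has_real_derivative_along_line[OF C])
  ultimately have tangent: "\<psi> y - \<psi> c \<ge> K c * (y - c)" for y c
    by (intro convex_on_imp_above_tangent) (auto intro: has_field_derivative_at_within)
  have mono: "K t \<ge> K 0" if "t > 0" for t
  proof -
    have "(K t - K 0) * t \<ge> 0"
      using tangent[of t 0] tangent[of 0 t] by (simp add: algebra_simps)
    with that show ?thesis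
      by (simp add: zero_le_mult_iff)
  qed
  have DK: "DERIV K 0 :> (Hs x *v h) \<bullet> h"
    unfolding K_def using C2_gradient_has_real_derivative_along_line[OF C, where p=x and \<tau>=0 and w=h and v=h] by simp
  show ?thesis
  proof (rule ccontr)
    assume "\<not> ?thesis"
    then have "(Hs x *v h) \<bullet> h < 0"
      by (simp add: inner_commute)
    from DERIV_neg_dec_right[OF DK this] obtain r where "r > 0" "\<forall>t>0. t < r \<longrightarrow> K 0 > K (0 + t)"
      by blast
    then have "K (r / 2) < K 0"
      by simp
    with mono[of "r / 2"] \<open>r > 0\<close> show False
      by simp
  qed
qed

definition along :: "real^2 \<Rightarrow> real^2 \<Rightarrow> real^2 \<Rightarrow> real" where
  "along a e x = ((x - a) \<bullet> e) / (e \<bullet> e)"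

definition across :: "real^2 \<Rightarrow> real^2 \<Rightarrow> real^2 \<Rightarrow> real" where
  "across a e x = ((x - a) \<bullet> rot90 e) / (e \<bullet> e)"

lemma along_across_decomposition:
  assumes "e \<noteq> 0"
  shows "x = a + along a e x *\<^sub>R e + across a e x *\<^sub>R rot90 e"
proof -
  have "x - a = (1 / (e \<bullet> e)) *\<^sub>R ((e \<bullet> e) *\<^sub>R (x - a))"
    using assms by simp
  also have "\<dots> = along a e x *\<^sub>R e + across a e x *\<^sub>R rot90 e"
    unfolding scaleR_inner_self_eq_rot90_decomposition along_def across_def
    by (simp add: scaleR_add_right)
  finally show ?thesis
    by (metis add.assoc add.commute diff_add_cancel)
qed

lemma dist_along_projection:
  assumes "e \<noteq> 0"
  shows "dist x (a + along a e x *\<^sub>R e) = \<bar>across a e x\<bar> * norm e"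
proof -
  have "x - (a + along a e x *\<^sub>R e) = across a e x *\<^sub>R rot90 e"
    using along_across_decomposition[OF assms, of x a] by (simp add: algebra_simps)
  then show ?thesis
    by (simp add: dist_norm)
qed

lemma along_on_line [simp]: "e \<noteq> 0 \<Longrightarrow> along a e (a + t *\<^sub>R e) = t"
  and across_on_line [simp]: "across a e (a + t *\<^sub>R e) = 0"
  by (simp_all add: along_def across_def)

lemma continuous_along [continuous_intros]: "continuous_on A (along a e)"
  and continuous_across [continuous_intros]: "continuous_on A (across a e)"
  unfolding along_def[abs_def] across_def[abs_def] divide_inverse by (intro continuous_intros)+

definition chord_penalty ::
    "(real^2 \<Rightarrow> real) \<Rightarrow> real^2 \<Rightarrow> real^2 \<Rightarrow> real \<Rightarrow> real \<Rightarrow> real \<Rightarrow> real^2 \<Rightarrow> real" where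
  "chord_penalty u a e \<tau> \<delta> M x =
     u a + (u (a + e) - u a) * along a e x - \<delta> * (along a e x - \<tau>)^2 + M * (across a e x)^2"

lemma C2_chord_penalty:
  assumes "e \<noteq> 0"
  shows "\<exists>g. C2_with (chord_penalty u a e \<tau> \<delta> M) g
              (\<lambda>x. frame_hessian (- \<delta> / (e \<bullet> e)^2) e (M / (e \<bullet> e)^2) (rot90 e))"
proof -
  let ?c = "u (a + e) - u a"
  have eq: "chord_penalty u a e \<tau> \<delta> M
      = (\<lambda>x. u a + (?c / (e \<bullet> e)) * ((x - a) \<bullet> e)
             + (- \<delta> / (e \<bullet> e)^2) * ((x - a) \<bullet> e - \<tau> * (e \<bullet> e))^2 + (M / (e \<bullet> e)^2) * ((x - a) \<bullet> rot90 e)^2)"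
  proof
    fix x
    have "n \<noteq> 0 \<Longrightarrow> c0 + c1 * (p / n) - \<delta> * (p / n - \<tau>)^2 + M * (q / n)^2
      = c0 + (c1 / n) * p + (- \<delta> / n^2) * (p - \<tau> * n)^2 + (M / n^2) * q^2" for c0 c1 p q n :: real
      by (simp add: field_simps power2_eq_square)
    moreover have "e \<bullet> e \<noteq> 0"
      using assms by simp
    ultimately show "chord_penalty u a e \<tau> \<delta> M x
      = u a + (?c / (e \<bullet> e)) * ((x - a) \<bullet> e)
        + (- \<delta> / (e \<bullet> e)^2) * ((x - a) \<bullet> e - \<tau> * (e \<bullet> e))^2 + (M / (e \<bullet> e)^2) * ((x - a) \<bullet> rot90 e)^2"
      unfolding chord_penalty_def along_def across_def by blast
  qed
  show ?thesis
    unfolding eq by (rule exI, rule C2_frame_quadratic)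
qed

lemma continuous_on_chord_penalty [continuous_intros]: "continuous_on A (chord_penalty u a e \<tau> \<delta> M)"
  unfolding chord_penalty_def[abs_def] by (intro continuous_intros)

lemma chord_penalty_excess_le:
  assumes lip: "L-lipschitz_on U u" and "e \<noteq> 0" "x \<in> U" "a + along a e x *\<^sub>R e \<in> U"
    and "0 \<le> \<delta>" "\<bar>along a e x - \<tau>\<bar> \<le> 1"
  shows "u x - chord_penalty u a e \<tau> \<delta> M x
    \<le> u (a + along a e x *\<^sub>R e) - (u a + along a e x * (u (a + e) - u a)) + \<delta>
       + (L * norm e * \<bar>across a e x\<bar> - M * (across a e x)^2)"
proof -
  have "(along a e x - \<tau>)^2 \<le> 1"
    using assms(6) by (simp add: abs_square_le_1)
  then have "\<delta> * (along a e x - \<tau>)^2 \<le> \<delta>"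
    using \<open>0 \<le> \<delta>\<close> by (simp add: mult_left_le)
  moreover have "u x - u (a + along a e x *\<^sub>R e) \<le> L * dist x (a + along a e x *\<^sub>R e)"
    using lipschitz_onD[OF lip \<open>x \<in> U\<close> \<open>a + along a e x *\<^sub>R e \<in> U\<close>] by (simp add: dist_real_def)
  ultimately show ?thesis
    using dist_along_projection[OF \<open>e \<noteq> 0\<close>] by (simp add: chord_penalty_def algebra_simps)
qed

lemma linear_minus_quadratic_le:
  fixes c M r :: real
  assumes "M > 0"
  shows "c * r - M * r^2 \<le> c^2 / (4 * M)"
proof -
  have "4 * M * (c * r - M * r^2) \<le> c^2"
    using zero_le_power2[of "2 * M * r - c"] by (simp add: power2_eq_square algebra_simps)
  then show ?thesis
    using assms by (simp add: field_simps)
qed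

lemma penalization_constants:
  fixes \<theta> c h :: real
  assumes "\<theta> > 0" "c \<ge> 0" "h > 0"
  obtains M where "M > 0" "\<theta> / 4 + (c * h - M * h^2) < 0" "\<And>r. \<theta> / 4 + (c * r - M * r^2) < \<theta>"
proof
  define M where "M = (\<theta> / 4 + c * h) / h^2 + c^2 / (2 * \<theta>) + 1"
  show "M > 0"
    using assms by (simp add: M_def add_pos_nonneg)
  have "M * h^2 = (\<theta> / 4 + c * h) + (c^2 / (2 * \<theta>) + 1) * h^2"
    using assms by (simp add: M_def field_simps)
  moreover have "(c^2 / (2 * \<theta>) + 1) * h^2 > 0"
    using assms by (simp add: add_nonneg_pos)
  ultimately show "\<theta> / 4 + (c * h - M * h^2) < 0"
    by linarith
  have "2 * \<theta> * M = 2 * \<theta> * ((\<theta> / 4 + c * h) / h^2 + 1) + c^2"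
    using assms by (simp add: M_def field_simps)
  moreover have "2 * \<theta> * ((\<theta> / 4 + c * h) / h^2 + 1) > 0"
    using assms by (simp add: add_nonneg_pos)
  ultimately have "c^2 < 2 * \<theta> * M"
    by linarith
  then have "c^2 / (4 * M) < \<theta> / 2"
    using assms \<open>M > 0\<close> by (simp add: field_simps)
  then show "\<theta> / 4 + (c * r - M * r^2) < \<theta>" for r
    using linear_minus_quadratic_le[OF \<open>M > 0\<close>, of c r] assms(1) by linarith
qed

lemma box_maximum_is_interior:
  fixes W :: "real^2 \<Rightarrow> real"
  assumes B_def: "B = {x. 0 \<le> along a e x \<and> along a e x \<le> 1 \<and> \<bar>across a e x\<bar> \<le> h}"
    and "bounded B" "continuous_on B W" "p \<in> B"
    and interior: "\<And>x. x \<in> B \<Longrightarrow> W p \<le> W x \<Longrightarrow> 0 < along a e x \<and> along a e x < 1 \<and> \<bar>across a e x\<bar> < h"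
  shows "\<exists>x0 r. r > 0 \<and> ball x0 r \<subseteq> B \<and> (\<forall>y\<in>B. W y \<le> W x0)"
proof -
  have "closed B"
    unfolding B_def by (intro closed_Collect_conj closed_Collect_le continuous_intros)
  with \<open>bounded B\<close> have "compact B"
    by (simp add: compact_eq_bounded_closed)
  then obtain x0 where x0: "x0 \<in> B" "\<And>y. y \<in> B \<Longrightarrow> W y \<le> W x0"
    using continuous_attains_sup[OF _ _ \<open>continuous_on B W\<close>] \<open>p \<in> B\<close> by blast
  define V where "V = {x. 0 < along a e x \<and> along a e x < 1 \<and> \<bar>across a e x\<bar> < h}"
  have "open V"
    unfolding V_def by (intro open_Collect_conj open_Collect_less continuous_intros)
  moreover have "x0 \<in> V"
    using interior[OF x0(1) x0(2)[OF \<open>p \<in> B\<close>]] by (simp add: V_def)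
  ultimately obtain r where "r > 0" "ball x0 r \<subseteq> V"
    using open_contains_ball by blast
  moreover have "V \<subseteq> B"
    by (auto simp: V_def B_def)
  ultimately show ?thesis
    using x0(2) by blast
qed

lemma box_subset_tube:
  assumes "e \<noteq> 0" "\<epsilon> > 0" and tube: "(\<Union>x\<in>closed_segment a (a + e). ball x \<epsilon>) \<subseteq> U"
  shows "{x. 0 \<le> along a e x \<and> along a e x \<le> 1 \<and> \<bar>across a e x\<bar> \<le> \<epsilon> / (2 * norm e)} \<subseteq> U"
proof
  fix x assume "x \<in> {x. 0 \<le> along a e x \<and> along a e x \<le> 1 \<and> \<bar>across a e x\<bar> \<le> \<epsilon> / (2 * norm e)}"
  then have x: "0 \<le> along a e x" "along a e x \<le> 1" "\<bar>across a e x\<bar> * norm e \<le> \<epsilon> / 2"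
    using assms(1) by (auto simp: field_simps)
  have "a + along a e x *\<^sub>R e \<in> closed_segment a (a + e)"
    using x(1,2) by (auto simp: closed_segment_def algebra_simps intro!: exI[of _ "along a e x"])
  moreover have "dist (a + along a e x *\<^sub>R e) x < \<epsilon>"
    using dist_along_projection[OF assms(1), of x a] x(3) \<open>\<epsilon> > 0\<close> by (simp add: dist_commute)
  ultimately show "x \<in> U"
    using tube by (meson UN_subset_iff mem_ball subsetD)
qed

lemma chord_penalty_above_peak_interior:
  fixes u :: "real^2 \<Rightarrow> real" and a e x :: "real^2"
  defines "f \<equiv> \<lambda>s. u (a + s *\<^sub>R e) - (u a + s * (u (a + e) - u a))"
  assumes lip: "L-lipschitz_on U u" and "e \<noteq> 0" and seg: "closed_segment a (a + e) \<subseteq> U" and "x \<in> U"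
    and \<tau>: "0 \<le> \<tau>" "\<tau> \<le> 1" "\<And>s. 0 \<le> s \<Longrightarrow> s \<le> 1 \<Longrightarrow> f s \<le> f \<tau>" and "f \<tau> > 0"
    and M: "f \<tau> / 4 + (L * norm e * h - M * h^2) < 0" "\<And>r. f \<tau> / 4 + (L * norm e * r - M * r^2) < f \<tau>"
    and x: "0 \<le> along a e x" "along a e x \<le> 1" "\<bar>across a e x\<bar> \<le> h"
    and above_peak: "f \<tau> \<le> u x - chord_penalty u a e \<tau> (f \<tau> / 4) M x"
  shows "0 < along a e x \<and> along a e x < 1 \<and> \<bar>across a e x\<bar> < h"
proof -
  let ?s = "along a e x" and ?r = "across a e x"
  have "a + ?s *\<^sub>R e \<in> U"
    using x(1,2) seg by (auto simp: closed_segment_def algebra_simps intro!: exI[of _ ?s])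
  moreover have "\<bar>?s - \<tau>\<bar> \<le> 1"
    using x(1,2) \<tau>(1,2) by linarith
  moreover have "0 \<le> f \<tau> / 4"
    using \<open>f \<tau> > 0\<close> by simp
  ultimately have "u x - chord_penalty u a e \<tau> (f \<tau> / 4) M x
      \<le> f ?s + (f \<tau> / 4 + (L * norm e * \<bar>?r\<bar> - M * \<bar>?r\<bar>^2))"
    using chord_penalty_excess_le[OF lip \<open>e \<noteq> 0\<close> \<open>x \<in> U\<close>, where M=M]
    unfolding f_def power2_abs by fastforce
  with above_peak have "f \<tau> \<le> f ?s + (f \<tau> / 4 + (L * norm e * \<bar>?r\<bar> - M * \<bar>?r\<bar>^2))"
    by linarith
  moreover have "f ?s \<le> f \<tau>" "f 0 = 0" "f 1 = 0"
    using \<tau>(3) x by (simp_all add: f_def)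
  text \<open>On the long sides of the box the penalty \<open>M r\<^sup>2\<close> beats the Lipschitz growth of \<open>u\<close>;
    at its ends the chord excess vanishes.\<close>
  ultimately have "?s \<noteq> 0" "?s \<noteq> 1" "\<bar>?r\<bar> \<noteq> h"
    using M(1) M(2)[of "\<bar>?r\<bar>"] by auto
  with x show ?thesis
    by simp
qed

lemma frame_quadratic_touches_chord_excess:
  fixes u :: "real^2 \<Rightarrow> real" and a e :: "real^2" and \<tau> :: real
  defines "f \<equiv> \<lambda>s. u (a + s *\<^sub>R e) - (u a + s * (u (a + e) - u a))"
  assumes "open U" "bounded U" and lip: "L-lipschitz_on U u"
    and seg: "closed_segment a (a + e) \<subseteq> U" and "e \<noteq> 0"
    and \<tau>: "0 \<le> \<tau>" "\<tau> \<le> 1" "\<And>s. 0 \<le> s \<Longrightarrow> s \<le> 1 \<Longrightarrow> f s \<le> f \<tau>" and "f \<tau> > 0"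
  obtains x0 \<phi> g \<alpha> \<gamma> where "x0 \<in> U" "\<alpha> < 0" "\<gamma> > 0"
    "C2_with \<phi> g (\<lambda>x. frame_hessian \<alpha> e \<gamma> (rot90 e))" "loc_max_in U (\<lambda>x. u x - \<phi> x) x0"
proof -
  define \<theta> where "\<theta> = f \<tau>"
  have "\<theta> > 0" "e \<bullet> e > 0"
    using \<open>f \<tau> > 0\<close> \<open>e \<noteq> 0\<close> by (simp_all add: \<theta>_def)
  obtain \<epsilon> where "\<epsilon> > 0" and tube: "(\<Union>x\<in>closed_segment a (a + e). ball x \<epsilon>) \<subseteq> U"
    using compact_subset_open_imp_ball_epsilon_subset[OF compact_segment \<open>open U\<close> seg] by blast
  define h where "h = \<epsilon> / (2 * norm e)"
  have "h > 0" "L * norm e \<ge> 0"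
    using \<open>\<epsilon> > 0\<close> \<open>e \<noteq> 0\<close> lipschitz_on_nonneg[OF lip] by (simp_all add: h_def)
  then obtain M where "M > 0" and M: "\<theta> / 4 + (L * norm e * h - M * h^2) < 0"
    "\<And>r. \<theta> / 4 + (L * norm e * r - M * r^2) < \<theta>"
    using penalization_constants[OF \<open>\<theta> > 0\<close>] by blast
  define \<phi> where "\<phi> = chord_penalty u a e \<tau> (\<theta> / 4) M"
  obtain g where C2: "C2_with \<phi> g (\<lambda>x. frame_hessian (- (\<theta> / 4) / (e \<bullet> e)^2) e (M / (e \<bullet> e)^2) (rot90 e))"
    unfolding \<phi>_def using C2_chord_penalty[OF \<open>e \<noteq> 0\<close>] by blast
  define B where "B = {x. 0 \<le> along a e x \<and> along a e x \<le> 1 \<and> \<bar>across a e x\<bar> \<le> h}"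
  have "B \<subseteq> U"
    unfolding B_def h_def by (rule box_subset_tube[OF \<open>e \<noteq> 0\<close> \<open>\<epsilon> > 0\<close> tube])
  have peak: "a + \<tau> *\<^sub>R e \<in> B" "u (a + \<tau> *\<^sub>R e) - \<phi> (a + \<tau> *\<^sub>R e) = \<theta>"
    using \<tau> \<open>e \<noteq> 0\<close> \<open>h > 0\<close> by (auto simp: B_def \<phi>_def chord_penalty_def \<theta>_def f_def)
  have interior: "0 < along a e x \<and> along a e x < 1 \<and> \<bar>across a e x\<bar> < h"
    if "x \<in> B" and "u (a + \<tau> *\<^sub>R e) - \<phi> (a + \<tau> *\<^sub>R e) \<le> u x - \<phi> x" for x
  proof (rule chord_penalty_above_peak_interior[OF lip \<open>e \<noteq> 0\<close> seg _ \<tau>(1,2)])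
    show "x \<in> U"
      using \<open>x \<in> B\<close> \<open>B \<subseteq> U\<close> by blast
  qed (use that peak(2) \<tau>(3) \<open>f \<tau> > 0\<close> M in \<open>auto simp: B_def \<phi>_def \<theta>_def f_def\<close>)
  have "continuous_on B (\<lambda>x. u x - \<phi> x)"
    using continuous_on_subset[OF lipschitz_on_continuous_on[OF lip] \<open>B \<subseteq> U\<close>]
    unfolding \<phi>_def by (intro continuous_intros)
  then obtain x0 r where "r > 0" "ball x0 r \<subseteq> B" and max: "\<forall>y\<in>B. u y - \<phi> y \<le> u x0 - \<phi> x0"
    using box_maximum_is_interior[OF B_def bounded_subset[OF \<open>bounded U\<close> \<open>B \<subseteq> U\<close>] _ peak(1) interior]
    by blast
  show ?thesis
  proof
    show "x0 \<in> U"
      using \<open>r > 0\<close> \<open>ball x0 r \<subseteq> B\<close> \<open>B \<subseteq> U\<close> centre_in_ball by blast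
    show "loc_max_in U (\<lambda>x. u x - \<phi> x) x0"
      unfolding loc_max_in_def using \<open>r > 0\<close> \<open>ball x0 r \<subseteq> B\<close> max by blast
  qed (use C2 \<open>\<theta> > 0\<close> \<open>M > 0\<close> \<open>e \<bullet> e > 0\<close> in simp_all)
qed

lemma convex_inequality_on_segment:
  fixes U :: "(real^2) set" and u :: "real^2 \<Rightarrow> real"
  assumes "open U" "bounded U" and lip: "L-lipschitz_on U u"
    and visc: "\<And>x0 \<phi> g Hs. x0 \<in> U \<Longrightarrow> C2_with \<phi> g Hs \<Longrightarrow> loc_max_in U (\<lambda>x. u x - \<phi> x) x0 \<Longrightarrow>
                 convexified_det (Hs x0) \<ge> 0"
    and seg: "closed_segment a b \<subseteq> U" and "0 \<le> t" "t \<le> 1"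
  shows "u ((1 - t) *\<^sub>R a + t *\<^sub>R b) \<le> (1 - t) * u a + t * u b"
proof (rule ccontr)
  assume violated: "\<not> ?thesis"
  define e where "e = b - a"
  define f where "f s = u (a + s *\<^sub>R e) - (u a + s * (u (a + e) - u a))" for s
  have "b = a + e" and line: "(1 - s) *\<^sub>R a + s *\<^sub>R b = a + s *\<^sub>R e" for s
    by (simp_all add: e_def algebra_simps)
  then have "e \<noteq> 0" "f t > 0"
    using violated by (auto simp: f_def algebra_simps)
  have "a + s *\<^sub>R e \<in> U" if "s \<in> {0..1}" for s
    using seg that line[of s] by (auto simp: closed_segment_def)
  then have "continuous_on {0..1} (\<lambda>s. u (a + s *\<^sub>R e))"
    by (intro continuous_on_compose2[OF lipschitz_on_continuous_on[OF lip]] continuous_intros) auto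
  then have "continuous_on {0..1} f"
    unfolding f_def by (intro continuous_intros)
  moreover have "{0..1::real} \<noteq> {}"
    by simp
  ultimately obtain \<tau> where "\<tau> \<in> {0..1}" and \<tau>: "\<And>s. s \<in> {0..1} \<Longrightarrow> f s \<le> f \<tau>"
    using continuous_attains_sup[OF compact_Icc] by blast
  with \<open>f t > 0\<close> \<open>0 \<le> t\<close> \<open>t \<le> 1\<close> have "f \<tau> > 0"
    by (meson atLeastAtMost_iff less_le_trans)
  have "closed_segment a (a + e) \<subseteq> U" "0 \<le> \<tau>" "\<tau> \<le> 1" "\<And>s. 0 \<le> s \<Longrightarrow> s \<le> 1 \<Longrightarrow> f s \<le> f \<tau>"
    using seg \<open>b = a + e\<close> \<open>\<tau> \<in> {0..1}\<close> \<tau> by simp_all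
  from frame_quadratic_touches_chord_excess[OF \<open>open U\<close> \<open>bounded U\<close> lip this(1) \<open>e \<noteq> 0\<close> this(2-4)[unfolded f_def]
      \<open>f \<tau> > 0\<close>[unfolded f_def]]
  obtain x0 \<alpha> \<gamma> \<phi> g where "x0 \<in> U" "\<alpha> < 0" "\<gamma> > 0"
    and C2: "C2_with \<phi> g (\<lambda>x. frame_hessian \<alpha> e \<gamma> (rot90 e))" and "loc_max_in U (\<lambda>x. u x - \<phi> x) x0" .
  then have "convexified_det (frame_hessian \<alpha> e \<gamma> (rot90 e)) \<ge> 0"
    using visc[OF _ C2] by blast
  with convexified_det_frame_hessian_neg[OF \<open>e \<noteq> 0\<close> \<open>\<alpha> < 0\<close> \<open>\<gamma> > 0\<close>] show False
    by simp
qed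

lemma finite_segment_crossings:
  assumes "finite D" "a \<noteq> b"
  shows "finite {s. \<exists>d\<in>D. d \<in> closed_segment (a + s *\<^sub>R rot90 (b - a)) (b + s *\<^sub>R rot90 (b - a))}"
proof (rule finite_subset)
  let ?w = "rot90 (b - a)"
  show "finite ((\<lambda>d. ((d - a) \<bullet> ?w) / (?w \<bullet> ?w)) ` D)"
    using assms(1) by simp
  show "{s. \<exists>d\<in>D. d \<in> closed_segment (a + s *\<^sub>R ?w) (b + s *\<^sub>R ?w)}
      \<subseteq> (\<lambda>d. ((d - a) \<bullet> ?w) / (?w \<bullet> ?w)) ` D"
  proof
    fix s assume "s \<in> {s. \<exists>d\<in>D. d \<in> closed_segment (a + s *\<^sub>R ?w) (b + s *\<^sub>R ?w)}"
    then obtain d l where "d \<in> D" and d: "d = (1 - l) *\<^sub>R (a + s *\<^sub>R ?w) + l *\<^sub>R (b + s *\<^sub>R ?w)"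
      by (auto simp: closed_segment_def)
    then have "d - a = l *\<^sub>R (b - a) + s *\<^sub>R ?w"
      by (simp add: algebra_simps)
    then have "(d - a) \<bullet> ?w = s * (?w \<bullet> ?w)"
      by (simp add: inner_add_left)
    moreover have "?w \<bullet> ?w \<noteq> 0"
      using assms(2) by simp
    ultimately show "s \<in> (\<lambda>d. ((d - a) \<bullet> ?w) / (?w \<bullet> ?w)) ` D"
      using \<open>d \<in> D\<close> by (auto intro!: image_eqI[of _ _ d])
  qed
qed

lemma eventually_shifted_segment_avoids_finite:
  fixes X D :: "(real^2) set"
  assumes "open X" "convex X" "finite D" "a \<in> X" "b \<in> X" "a \<noteq> b"
  shows "\<forall>\<^sub>F s in at 0. closed_segment (a + s *\<^sub>R rot90 (b - a)) (b + s *\<^sub>R rot90 (b - a)) \<subseteq> X - D"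
proof -
  let ?w = "rot90 (b - a)"
  have shifted_in: "\<forall>\<^sub>F s in at 0. c + s *\<^sub>R ?w \<in> X" if "c \<in> X" for c
  proof -
    have "((\<lambda>s. c + s *\<^sub>R ?w) \<longlongrightarrow> c) (at 0)"
      by (intro tendsto_eq_intros) auto
    then show ?thesis
      using topological_tendstoD[OF _ \<open>open X\<close> that] by blast
  qed
  have "\<forall>\<^sub>F s in at 0. s \<notin> {s. \<exists>d\<in>D. d \<in> closed_segment (a + s *\<^sub>R ?w) (b + s *\<^sub>R ?w)}"
    using islimpt_finite[OF finite_segment_crossings[OF \<open>finite D\<close> \<open>a \<noteq> b\<close>]]
    unfolding islimpt_iff_eventually by blast
  with shifted_in[OF \<open>a \<in> X\<close>] shifted_in[OF \<open>b \<in> X\<close>] show ?thesis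
    by eventually_elim (use \<open>convex X\<close> in \<open>auto dest: closed_segment_subset\<close>)
qed

lemma isCont_compose_line:
  fixes u :: "'a::real_normed_vector \<Rightarrow> 'b::topological_space"
  assumes "continuous_on X u" "open X" "c \<in> X"
  shows "isCont (\<lambda>s. u (c + s *\<^sub>R w)) 0"
proof (rule isCont_o2[where g=u])
  show "isCont (\<lambda>s. c + s *\<^sub>R w) 0"
    by (intro continuous_intros)
  show "isCont u (c + 0 *\<^sub>R w)"
    using assms by (simp add: continuous_on_eq_continuous_at)
qed

lemma convex_inequality_avoiding_finite_set:
  fixes X D :: "(real^2) set" and u :: "real^2 \<Rightarrow> real"
  assumes "open X" "convex X" "finite D" and cont: "continuous_on X u"
    and seg: "\<And>a b t. closed_segment a b \<subseteq> X - D \<Longrightarrow> 0 \<le> t \<Longrightarrow> t \<le> 1 \<Longrightarrow>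
                u ((1 - t) *\<^sub>R a + t *\<^sub>R b) \<le> (1 - t) * u a + t * u b"
    and "a \<in> X" "b \<in> X" "0 \<le> t" "t \<le> 1"
  shows "u ((1 - t) *\<^sub>R a + t *\<^sub>R b) \<le> (1 - t) * u a + t * u b"
proof (cases "a = b")
  case True
  then show ?thesis
    by (simp add: algebra_simps)
next
  case False
  define w where "w = rot90 (b - a)"
  define m where "m = (1 - t) *\<^sub>R a + t *\<^sub>R b"
  define F where "F s = u (m + s *\<^sub>R w) - (1 - t) * u (a + s *\<^sub>R w) - t * u (b + s *\<^sub>R w)" for s
  note eventually_shifted_segment_avoids_finite[OF \<open>open X\<close> \<open>convex X\<close> \<open>finite D\<close> \<open>a \<in> X\<close> \<open>b \<in> X\<close> False]
  moreover have "F s \<le> 0" if "closed_segment (a + s *\<^sub>R w) (b + s *\<^sub>R w) \<subseteq> X - D" for s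
  proof -
    have "(1 - t) *\<^sub>R (a + s *\<^sub>R w) + t *\<^sub>R (b + s *\<^sub>R w) = m + s *\<^sub>R w"
      by (simp add: m_def algebra_simps)
    then show ?thesis
      using seg[OF that \<open>0 \<le> t\<close> \<open>t \<le> 1\<close>] by (simp add: F_def)
  qed
  ultimately have "\<forall>\<^sub>F s in at 0. F s \<le> 0"
    unfolding w_def by (rule eventually_mono)
  then have "\<forall>\<^sub>F s in at_right 0. F s \<le> 0"
    by (simp add: eventually_at_split)
  moreover have "(F \<longlongrightarrow> F 0) (at_right 0)"
  proof -
    have "m \<in> X"
      using \<open>convex X\<close> \<open>a \<in> X\<close> \<open>b \<in> X\<close> \<open>0 \<le> t\<close> \<open>t \<le> 1\<close> by (simp add: m_def convex_alt)
    then have "isCont (\<lambda>s. u (c + s *\<^sub>R w)) 0" if "c \<in> {m, a, b}" for c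
      using isCont_compose_line[OF cont \<open>open X\<close>] that \<open>a \<in> X\<close> \<open>b \<in> X\<close> by blast
    then have "isCont F 0"
      unfolding F_def by (intro continuous_intros) simp_all
    then show ?thesis
      by (simp add: isCont_def filterlim_at_split)
  qed
  ultimately have "F 0 \<le> 0"
    using tendsto_upperbound trivial_limit_at_right_real by blast
  then show ?thesis
    by (simp add: F_def m_def)
qed

lemma convex_on_closure:
  fixes u :: "'a::real_normed_vector \<Rightarrow> real"
  assumes "convex_on X u" "continuous_on (closure X) u"
  shows "convex_on (closure X) u"
proof (rule convex_onI)
  have "convex X"
    using assms(1) by (rule convex_on_imp_convex)
  then show "convex (closure X)"
    by (rule convex_closure)
  fix t :: real and x y assume t: "0 < t" "t < 1" and "x \<in> closure X" "y \<in> closure X"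
  then obtain xs ys where xs: "\<And>n. xs n \<in> X" "xs \<longlonglongrightarrow> x" and ys: "\<And>n. ys n \<in> X" "ys \<longlonglongrightarrow> y"
    unfolding closure_sequential by blast
  have "(1 - t) *\<^sub>R xs n + t *\<^sub>R ys n \<in> X" for n
    using \<open>convex X\<close> xs(1) ys(1) t by (simp add: convex_alt)
  then have in_closure: "\<And>n. (1 - t) *\<^sub>R xs n + t *\<^sub>R ys n \<in> closure X"
    using closure_subset by blast
  have lim_x: "(\<lambda>n. u (xs n)) \<longlonglongrightarrow> u x"
    using xs(1) closure_subset
    by (intro continuous_on_tendsto_compose[OF assms(2) xs(2) \<open>x \<in> closure X\<close>] always_eventually) blast
  have lim_y: "(\<lambda>n. u (ys n)) \<longlonglongrightarrow> u y"
    using ys(1) closure_subset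
    by (intro continuous_on_tendsto_compose[OF assms(2) ys(2) \<open>y \<in> closure X\<close>] always_eventually) blast
  have "(1 - t) *\<^sub>R x + t *\<^sub>R y \<in> closure X"
    using convex_closure[OF \<open>convex X\<close>] \<open>x \<in> closure X\<close> \<open>y \<in> closure X\<close> t by (simp add: convex_alt)
  then have "(\<lambda>n. u ((1 - t) *\<^sub>R xs n + t *\<^sub>R ys n)) \<longlonglongrightarrow> u ((1 - t) *\<^sub>R x + t *\<^sub>R y)"
    by (intro continuous_on_tendsto_compose[OF assms(2)] tendsto_intros xs(2) ys(2)
        always_eventually allI in_closure)
  moreover have "(\<lambda>n. (1 - t) * u (xs n) + t * u (ys n)) \<longlonglongrightarrow> (1 - t) * u x + t * u y"
    by (intro tendsto_intros lim_x lim_y)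
  moreover have "\<forall>n\<ge>0. u ((1 - t) *\<^sub>R xs n + t *\<^sub>R ys n) \<le> (1 - t) * u (xs n) + t * u (ys n)"
    using convex_onD[OF assms(1)] xs(1) ys(1) t by simp
  ultimately show "u ((1 - t) *\<^sub>R x + t *\<^sub>R y) \<le> (1 - t) * u x + t * u y"
    by (intro LIMSEQ_le) blast+
qed

lemma loc_max_in_open_superset:
  assumes "loc_max_in U f x0" "open U" "x0 \<in> U" "U \<subseteq> S"
  shows "loc_max_in S f x0"
proof -
  obtain e where "e > 0" and max: "\<forall>x\<in>U \<inter> ball x0 e. f x \<le> f x0"
    using assms(1) unfolding loc_max_in_def by blast
  obtain r where "r > 0" "ball x0 r \<subseteq> U"
    using assms(2,3) open_contains_ball by blast
  with max \<open>e > 0\<close> show ?thesis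
    unfolding loc_max_in_def by (intro exI[of _ "min e r"]) auto
qed

lemma convex_on_closure_if_convexified_det_subsolution:
  fixes X D :: "(real^2) set" and u :: "real^2 \<Rightarrow> real"
  assumes "open X" "bounded X" "convex X" "finite D" and lip: "L-lipschitz_on (closure X) u"
    and visc: "\<And>x0 \<phi> g Hs. x0 \<in> X - D \<Longrightarrow> C2_with \<phi> g Hs \<Longrightarrow>
                 loc_max_in (closure X) (\<lambda>x. u x - \<phi> x) x0 \<Longrightarrow> convexified_det (Hs x0) \<ge> 0"
  shows "convex_on (closure X) u"
proof (rule convex_on_closure)
  have "open (X - D)"
    using \<open>open X\<close> \<open>finite D\<close> by (simp add: open_Diff finite_imp_closed)
  moreover have "X - D \<subseteq> closure X"
    using closure_subset by blast
  ultimately have "convexified_det (Hs x0) \<ge> 0"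
    if "x0 \<in> X - D" "C2_with \<phi> g Hs" "loc_max_in (X - D) (\<lambda>x. u x - \<phi> x) x0" for x0 \<phi> g Hs
    using visc loc_max_in_open_superset that by blast
  with \<open>open (X - D)\<close> \<open>X - D \<subseteq> closure X\<close>
  have "u ((1 - t) *\<^sub>R a + t *\<^sub>R b) \<le> (1 - t) * u a + t * u b"
    if "closed_segment a b \<subseteq> X - D" "0 \<le> t" "t \<le> 1" for a b t
    using convex_inequality_on_segment[OF _ bounded_subset[OF \<open>bounded X\<close>] lipschitz_on_subset[OF lip]]
      that by blast
  then show "convex_on X u"
    using convex_inequality_avoiding_finite_set[OF \<open>open X\<close> \<open>convex X\<close> \<open>finite D\<close>
        continuous_on_subset[OF lipschitz_on_continuous_on[OF lip] closure_subset]]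
    by (intro convex_onI \<open>convex X\<close>) auto
  show "continuous_on (closure X) u"
    using lip by (rule lipschitz_on_continuous_on)
qed

lemma C2_convex_det_hessian:
  assumes "C2_with \<phi> g Hs" "convex_on UNIV \<phi>"
  shows "0 \<le> det (Hs x)" "det (Hs x) \<le> convexified_det (Hs x)"
  using det_nonneg_if_psd det_le_convexified_det C2_convex_hessian_psd[OF assms] C2_hessian_symmetric[OF assms(1)]
  by blast+

lemma Fop_nonpos_if_Fcop_nonpos:
  assumes "C2_with \<phi> g Hs" "convex_on UNIV \<phi>" "Fcop X u x (g x) (Hs x) \<le> 0"
  shows "Fop X u x (g x) (Hs x) \<le> 0"
  using assms(3) C2_convex_det_hessian(1)[OF assms(1,2), of x] by (simp add: Fop_def Fcop_def split: if_splits)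

lemma Fop_nonneg_if_Fcop_nonneg:
  assumes "C2_with \<phi> g Hs" "convex_on UNIV \<phi>" "Fcop X u x (g x) (Hs x) \<ge> 0"
  shows "Fop X u x (g x) (Hs x) \<ge> 0"
  using assms(3) C2_convex_det_hessian(2)[OF assms(1,2), of x] by (simp add: Fop_def Fcop_def split: if_splits)

lemma convex_on_closure_if_mixed_sol_Fc:
  assumes "bounded X" "open X" "convex X" "mixed_sol_Fc X K d \<alpha> u"
  shows "convex_on (closure X) u"
proof -
  obtain L where lip: "L-lipschitz_on (closure X) u"
    and sub: "\<And>x0 \<phi> g Hs. x0 \<in> closure X - d ` {..<K} \<Longrightarrow> C2_with \<phi> g Hs \<Longrightarrow>
                gen_max X u \<phi> g Hs x0 \<Longrightarrow> Fcop X u x0 (g x0) (Hs x0) \<le> 0"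
    using assms(4) unfolding mixed_sol_Fc_def by blast
  have interior: "x \<notin> frontier X" if "x \<in> X" for x
    using that \<open>open X\<close> by (simp add: frontier_def interior_open)
  show ?thesis
  proof (rule convex_on_closure_if_convexified_det_subsolution[OF \<open>open X\<close> \<open>bounded X\<close> \<open>convex X\<close> _ lip])
    fix x0 \<phi> g Hs
    assume x0: "x0 \<in> X - d ` {..<K}" and "C2_with \<phi> g Hs" "loc_max_in (closure X) (\<lambda>x. u x - \<phi> x) x0"
    with sub interior closure_subset have "Fcop X u x0 (g x0) (Hs x0) \<le> 0"
      unfolding gen_max_def by blast
    with interior x0 show "convexified_det (Hs x0) \<ge> 0"
      by (simp add: Fcop_def)
  qed simp
qed

theorem lemmaA4:
  fixes K :: nat and d :: "nat \<Rightarrow> real ^ 2" and \<alpha> :: "nat \<Rightarrow> real"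
    and X :: "(real ^ 2) set" and u :: "real ^ 2 \<Rightarrow> real"
  assumes "K \<ge> 1"
    and "\<forall>k<K. \<alpha> k > 0"
    and "(\<Sum>k<K. \<alpha> k) = pi"
    and "bounded X" and "open X" and "convex X"
    and "\<forall>k<K. d k \<in> X"
    and "mixed_sol_Fc X K d \<alpha> u"
  shows "convex_on (closure X) u \<and> mixed_sol_F X K d \<alpha> u"
proof -
  have "convex_on (closure X) u"
    using convex_on_closure_if_mixed_sol_Fc[OF assms(4-6,8)] .
  moreover have "mixed_sol_F X K d \<alpha> u"
    using \<open>convex_on (closure X) u\<close> assms(8) Fop_nonpos_if_Fcop_nonpos Fop_nonneg_if_Fcop_nonneg
    unfolding mixed_sol_F_def mixed_sol_Fc_def by blast
  ultimately show ?thesis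
    by blast
qed

end
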